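(* Let $r=[r_0,\ldots,r_m]$ and $c=[c_0,\ldots,c_n]$ be selections of rows and columns of the Pascal upper triangular matrix $T$. If $r_0>c_n$, then $T_{r,c}$ is the zero matrix and has rank $0$. Otherwise, define $M:=\max\{i : r_i\le c_n\}$, $\beta_0:=\min\{k : r_0\le c_k\}$, and for $i=1,\ldots,M$, $\beta_i:=\max\{\min\{k: r_i\le c_k\},\ \beta_{i-1}+1\}$; let $p:=\max\{i\in\{0,\ldots,M\} : \beta_i\le n\}$, $\alpha=[0,1,\ldots,p]$, $\beta=[\beta_0,\ldots,\beta_p]$, $\hat r=[r_0,\ldots,r_p]$ and $\hat c=[c_{\beta_0},\ldots,c_{\beta_p}]$. Then $\{\hat r,\hat c\}$ is a maximal ordered sub-pair of $\{r,c\}$; consequently $\operatorname{rank}(T_{r,c})=p+1$, $T_{\hat r,\hat c}$ is invertible, the rows of $T_{\hat r,c}$ form a basis of the row space of $T_{r,c}$, and the columns of $T_{r,\hat c}$ form a basis of the column space of $T_{r,c}$.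
   Context: The Pascal upper triangular matrix is the infinite matrix $T=(T_{i,j})_{i,j\ge 0}$ with $T_{i,j}=\binom{j}{i}$, where $\binom{j}{i}:=0$ if $i>j$ (rows and columns indexed from $0$). A selection of rows (resp. columns) is a strictly increasing finite sequence of nonnegative integers. For selections $r=[r_0,\ldots,r_m]$ and $c=[c_0,\ldots,c_n]$, $T_{r,c}$ denotes the $(m+1)\times(n+1)$ matrix whose $(i,j)$ entry is $\binom{c_j}{r_i}$. A pair $\{\hat r,\hat c\}$ is an ordered sub-pair of $\{r,c\}$ of length $p+1$ if $\hat r=[\hat r_0,\ldots,\hat r_p]$ is a subsequence of $r$, $\hat c=[\hat c_0,\ldots,\hat c_p]$ is a subsequence of $c$, and $\hat r_i\le \hat c_i$ for all $i=0,\ldots,p$ (the empty pair has length $0$). It is maximal if no ordered sub-pair of $\{r,c\}$ has length greater than $p+1$. *)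

theory Defs
  imports "Jordan_Normal_Form.DL_Rank" "HOL-Library.Sublist"
begin

definition selection :: "nat list \<Rightarrow> bool" where
  "selection s \<longleftrightarrow> s \<noteq> [] \<and> sorted_wrt (<) s"

definition pascal_sub :: "nat list \<Rightarrow> nat list \<Rightarrow> real mat" where
  "pascal_sub r c = mat (length r) (length c) (\<lambda>(i,j). real ((c ! j) choose (r ! i)))"

definition ordered_subpair :: "nat list \<Rightarrow> nat list \<Rightarrow> nat list \<Rightarrow> nat list \<Rightarrow> bool" where
  "ordered_subpair r c rh ch \<longleftrightarrow>
     subseq rh r \<and> subseq ch c \<and> length rh = length ch \<and> (\<forall>i < length rh. rh ! i \<le> ch ! i)"

definition maximal_ordered_subpair :: "nat list \<Rightarrow> nat list \<Rightarrow> nat list \<Rightarrow> nat list \<Rightarrow> bool" where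
  "maximal_ordered_subpair r c rh ch \<longleftrightarrow>
     ordered_subpair r c rh ch \<and>
     (\<forall>rh' ch'. ordered_subpair r c rh' ch' \<longrightarrow> length rh' \<le> length rh)"

text \<open>The quantities M, beta_i, p of the theorem (0-based indices; c_n = last c).\<close>
definition selM :: "nat list \<Rightarrow> nat list \<Rightarrow> nat" where
  "selM r c = (GREATEST i. i < length r \<and> r ! i \<le> last c)"

fun sel_beta :: "nat list \<Rightarrow> nat list \<Rightarrow> nat \<Rightarrow> nat" where
  "sel_beta r c 0 = (LEAST k. k < length c \<and> r ! 0 \<le> c ! k)"
| "sel_beta r c (Suc i) = max (LEAST k. k < length c \<and> r ! Suc i \<le> c ! k) (sel_beta r c i + 1)"

definition sel_p :: "nat list \<Rightarrow> nat list \<Rightarrow> nat" where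
  "sel_p r c = (GREATEST i. i \<le> selM r c \<and> sel_beta r c i < length c)"

definition sel_rhat :: "nat list \<Rightarrow> nat list \<Rightarrow> nat list" where
  "sel_rhat r c = take (sel_p r c + 1) r"

definition sel_chat :: "nat list \<Rightarrow> nat list \<Rightarrow> nat list" where
  "sel_chat r c = map (\<lambda>i. c ! sel_beta r c i) [0..<sel_p r c + 1]"

end

theory Submission
  imports Defs
begin

text \<open>
  The Pascal matrix is totally nonnegative: for strictly increasing \<open>a\<close>, \<open>b\<close> of equal
  length, \<open>det T\<^bsub>a,b\<^esub> \<ge> 0\<close>, with strict inequality when \<open>a\<^sub>i \<le> b\<^sub>i\<close> for all \<open>i\<close>.
  This follows by induction from Pascal's rule, which splits every row of \<open>T\<^bsub>a,b+1\<^esub>\<close>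
  into a row of \<open>T\<^bsub>a,b\<^esub>\<close> plus a row of \<open>T\<^bsub>a-1,b\<^esub>\<close>. Hence the square matrix of every
  ordered sub-pair is nonsingular, its columns in \<open>T\<^bsub>r,c\<^esub>\<close> are independent, and no
  ordered sub-pair is longer than the rank.

  Conversely every row \<open>r\<^sub>t\<close> with \<open>t > p\<close> is a combination of the rows \<open>r\<^sub>0, \<dots>, r\<^sub>p\<close>:
  either \<open>r\<^sub>t > c\<^sub>n\<close> and the row vanishes, or \<open>\<beta>\<close> has reached the last column at \<open>p\<close>.
  In the latter case the \<open>\<beta>\<^sub>i\<close> are consecutive from the last index \<open>j\<^sub>0\<close> at which
  \<open>\<beta>\<^sub>i = min {k. r\<^sub>i \<le> c\<^sub>k}\<close>, the block of rows \<open>r\<^sub>j\<^sub>0, \<dots>, r\<^sub>p\<close> and of the last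
  columns of \<open>c\<close> is nonsingular, and all earlier columns vanish on the rows \<open>r\<^sub>t\<close>, \<open>t \<ge> j\<^sub>0\<close>.
  So \<open>pascal_sub r c = L * pascal_sub (sel_rhat r c) c\<close>, hence also
  \<open>pascal_sub r (sel_chat r c) = L * pascal_sub (sel_rhat r c) (sel_chat r c)\<close> with an
  invertible right factor, which yields the rank and both bases.
\<close>

lemma det_mat_add_eq_sum_row_choices:
  fixes f g :: "nat \<Rightarrow> nat \<Rightarrow> 'a::comm_ring_1"
  shows "det (mat n n (\<lambda>(i,j). f i j + g i j)) =
    (\<Sum>S\<in>Pow {0..<n}. det (mat n n (\<lambda>(i,j). if i \<in> S then g i j else f i j)))"
proof -
  let ?P = "{p. p permutes {0..<n}}"
  have pin: "p permutes {0..<n} \<Longrightarrow> i < n \<Longrightarrow> p i < n" for p i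
    using permutes_in_image by fastforce
  have "det (mat n n (\<lambda>(i,j). f i j + g i j)) =
     (\<Sum>p\<in>?P. signof p * (\<Prod>i=0..<n. g i (p i) + f i (p i)))"
    by (subst det_def'[of _ n], simp, intro sum.cong refl arg_cong2[where f="(*)"] prod.cong,
        auto simp: pin add.commute)
  also have "\<dots> = (\<Sum>p\<in>?P. \<Sum>S\<in>Pow {0..<n}.
      signof p * ((\<Prod>i\<in>S. g i (p i)) * (\<Prod>i\<in>{0..<n}-S. f i (p i))))"
    by (simp add: prod_add sum_distrib_left)
  also have "\<dots> = (\<Sum>S\<in>Pow {0..<n}. \<Sum>p\<in>?P.
      signof p * ((\<Prod>i\<in>S. g i (p i)) * (\<Prod>i\<in>{0..<n}-S. f i (p i))))"
    by (rule sum.swap)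
  also have "\<dots> = (\<Sum>S\<in>Pow {0..<n}. det (mat n n (\<lambda>(i,j). if i \<in> S then g i j else f i j)))"
  proof (rule sum.cong[OF refl])
    fix S assume S: "S \<in> Pow {0..<n}"
    show "(\<Sum>p\<in>?P. signof p * ((\<Prod>i\<in>S. g i (p i)) * (\<Prod>i\<in>{0..<n}-S. f i (p i)))) =
      det (mat n n (\<lambda>(i,j). if i \<in> S then g i j else f i j))"
    proof (subst det_def'[of _ n], simp, intro sum.cong refl arg_cong2[where f="(*)"])
      fix p assume p: "p \<in> ?P"
      have "(\<Prod>i = 0..<n. mat n n (\<lambda>(i,j). if i \<in> S then g i j else f i j) $$ (i, p i))
          = (\<Prod>i = 0..<n. (if i \<in> S then g i (p i) else f i (p i)))"
        using p pin by (intro prod.cong, auto)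
      also have "\<dots> = (\<Prod>i\<in>S. g i (p i)) * (\<Prod>i\<in>{0..<n}-S. f i (p i))"
        using S by (subst prod.If_cases, auto simp: Int_absorb1 Diff_eq)
      finally show "(\<Prod>i\<in>S. g i (p i)) * (\<Prod>i\<in>{0..<n}-S. f i (p i)) =
         (\<Prod>i = 0..<n. mat n n (\<lambda>(i,j). if i \<in> S then g i j else f i j) $$ (i, p i))"
        by simp
    qed
  qed
  finally show ?thesis .
qed

lemma det_inverse_exists:
  assumes A: "(A :: 'a :: field mat) \<in> carrier_mat n n" and d: "det A \<noteq> 0"
  obtains B where "B \<in> carrier_mat n n" "A * B = 1\<^sub>m n" "B * A = 1\<^sub>m n"
proof -
  have "A \<in> Units (ring_mat TYPE('a) n ())" by (rule det_non_zero_imp_unit[OF A d])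
  then show ?thesis using that unfolding Units_def ring_mat_simps by blast
qed

lemma ex_row_combination_if_det_ne_0:
  assumes A: "(A :: 'a :: field mat) \<in> carrier_mat n n" and d: "det A \<noteq> 0"
  shows "\<exists>z. \<forall>k<n. (\<Sum>i<n. z i * A $$ (i,k)) = w k"
proof -
  have "det (transpose_mat A) \<noteq> 0" using d det_transpose[OF A] by simp
  then obtain Ti where Ti: "Ti \<in> carrier_mat n n" "transpose_mat A * Ti = 1\<^sub>m n"
    using det_inverse_exists[of "transpose_mat A" n] A by auto
  define z where "z = Ti *\<^sub>v vec n w"
  have z: "z \<in> carrier_vec n" using Ti by (simp add: z_def)
  have Tz: "transpose_mat A *\<^sub>v z = vec n w"
    using A Ti by (simp add: z_def assoc_mult_mat_vec[symmetric])
  have "(\<Sum>i<n. z $ i * A $$ (i,k)) = w k" if k: "k < n" for k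
  proof -
    have "(transpose_mat A *\<^sub>v z) $ k = (\<Sum>i<n. z $ i * A $$ (i,k))"
      using k A z by (auto simp: scalar_prod_def atLeast0LessThan mult.commute intro!: sum.cong)
    then show ?thesis using Tz k by simp
  qed
  then show ?thesis by blast
qed

lemma col_mult_eq_mult_inverse_col:
  fixes L :: "'a :: comm_ring_1 mat"
  assumes L: "L \<in> carrier_mat n p" and B: "B \<in> carrier_mat p m"
    and S: "S \<in> carrier_mat p p" and Si: "Si \<in> carrier_mat p p" "S * Si = 1\<^sub>m p"
    and k: "k < m"
  shows "col (L * B) k = (L * S) *\<^sub>v (Si *\<^sub>v col B k)"
proof -
  have cb: "col B k \<in> carrier_vec p" using B unfolding carrier_vec_def by auto
  have "(L * S) *\<^sub>v (Si *\<^sub>v col B k) = L *\<^sub>v ((S * Si) *\<^sub>v col B k)"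
    using L S Si(1) cb by (simp add: assoc_mult_mat_vec)
  also have "\<dots> = L *\<^sub>v col B k" using cb by (simp add: Si(2))
  also have "\<dots> = col (L * B) k" by (rule col_mult2[OF L B k, symmetric])
  finally show ?thesis ..
qed

lemma distinct_cols_if_injective:
  fixes C :: "'a :: comm_ring_1 mat"
  assumes C: "C \<in> carrier_mat n k"
    and inj: "\<And>x. x \<in> carrier_vec k \<Longrightarrow> C *\<^sub>v x = 0\<^sub>v n \<Longrightarrow> x = 0\<^sub>v k"
  shows "distinct (cols C)"
  unfolding distinct_conv_nth
proof (intro allI impI notI)
  fix i j assume i: "i < length (cols C)" and j: "j < length (cols C)" and ij: "i \<noteq> j"
    and eq: "cols C ! i = cols C ! j"
  have ik: "i < k" and jk: "j < k" using i j C by auto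
  define x :: "'a vec" where "x = unit_vec k i - unit_vec k j"
  have x: "x \<in> carrier_vec k" by (simp add: x_def)
  have "C *\<^sub>v x = 0\<^sub>v n"
  proof (rule eq_vecI)
    fix t assume "t < dim_vec (0\<^sub>v n)"
    then have t: "t < n" by simp
    have "(C *\<^sub>v x) $ t = row C t \<bullet> unit_vec k i - row C t \<bullet> unit_vec k j"
      using C t unfolding x_def by (simp add: scalar_prod_minus_distrib[of _ k])
    also have "\<dots> = C $$ (t,i) - C $$ (t,j)" using C t ik jk by simp
    also have "C $$ (t,i) = C $$ (t,j)"
      using arg_cong[OF eq, of "\<lambda>v. v $ t"] C t ik jk by simp
    finally show "(C *\<^sub>v x) $ t = 0\<^sub>v n $ t" using t by simp
  qed (use C in simp)
  with inj[OF x] have "x = 0\<^sub>v k" .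
  then have "x $ i = 0" using ik by simp
  moreover have "x $ i = 1" using ik jk ij by (simp add: x_def)
  ultimately show False by simp
qed

lemma subseq_sorted_wrt:
  "subseq xs ys \<Longrightarrow> sorted_wrt R ys \<Longrightarrow> sorted_wrt R xs"
proof (induction rule: list_emb.induct)
  case (list_emb_Cons2 x y xs ys)
  then show ?case using list_emb_set[OF list_emb_Cons2(2)] by auto
qed auto

lemma set_subseq_subset: "subseq xs ys \<Longrightarrow> set xs \<subseteq> set ys"
  by (metis subseq_conv_nths set_nths_subset)

lemma pascal_sub_carrier [simp]: "pascal_sub a b \<in> carrier_mat (length a) (length b)"
  by (simp add: pascal_sub_def)

lemma pascal_sub_index [simp]: "i < length a \<Longrightarrow> j < length b \<Longrightarrow>
  pascal_sub a b $$ (i,j) = real ((b!j) choose (a!i))"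
  by (simp add: pascal_sub_def)

lemma pascal_sub_dims [simp]:
  "dim_row (pascal_sub a b) = length a" "dim_col (pascal_sub a b) = length b"
  by (simp_all add: pascal_sub_def)

lemma det_pascal_sub_Cons_0:
  assumes "length a = length b" and "sorted_wrt (<) (x # a)"
  shows "det (pascal_sub (x # a) (0 # b)) = (if x = 0 then det (pascal_sub a b) else 0)"
proof -
  let ?A = "pascal_sub (x # a) (0 # b)" and ?n = "Suc (length a)"
  have A: "?A \<in> carrier_mat ?n ?n" using assms(1) by (metis pascal_sub_carrier length_Cons)
  have col0: "?A $$ (i,0) = (if i = 0 \<and> x = 0 then 1 else 0)" if "i < ?n" for i
    using that assms(2) by (cases i) (auto simp: set_conv_nth)
  have "mat_delete ?A 0 0 = pascal_sub a b"
    using assms(1) by (intro eq_matI) (auto simp: mat_delete_def)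
  then have cofactor: "cofactor ?A 0 0 = det (pascal_sub a b)" by (simp add: cofactor_def)
  have "det ?A = (\<Sum>i<?n. ?A $$ (i,0) * cofactor ?A i 0)"
    by (rule laplace_expansion_column[OF A]) simp
  also have "\<dots> = (\<Sum>i<?n. if i = 0 then (if x = 0 then cofactor ?A 0 0 else 0) else 0)"
    by (intro sum.cong refl) (simp del: pascal_sub_index add: col0)
  also have "\<dots> = (if x = 0 then det (pascal_sub a b) else 0)"
    unfolding cofactor by simp
  finally show ?thesis .
qed

definition lower_entries :: "nat set \<Rightarrow> nat list \<Rightarrow> nat list" where
  "lower_entries S a = map (\<lambda>i. if i \<in> S then a!i - 1 else a!i) [0..<length a]"

lemma length_lower_entries [simp]: "length (lower_entries S a) = length a"
  by (simp add: lower_entries_def)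

lemma nth_lower_entries [simp]:
  "i < length a \<Longrightarrow> lower_entries S a ! i = (if i \<in> S then a!i - 1 else a!i)"
  by (simp add: lower_entries_def)

lemma sorted_lower_entries:
  assumes "sorted_wrt (<) a"
  shows "sorted (lower_entries S a)"
  unfolding sorted_iff_nth_Suc length_lower_entries
proof (intro allI impI)
  fix i assume i: "Suc i < length a"
  then have "a!i < a!Suc i" using assms by (simp add: sorted_wrt_iff_nth_less)
  then show "lower_entries S a ! i \<le> lower_entries S a ! Suc i" using i by auto
qed

lemma sorted_wrt_lower_entries_tight:
  assumes a: "sorted_wrt (<) a" and b: "sorted_wrt (<) b" and len: "length a = length b"
    and le: "\<forall>i<length a. a!i \<le> Suc (b!i)"
  defines "S \<equiv> {i. i < length a \<and> a!i = Suc (b!i)}"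
  shows "sorted_wrt (<) (lower_entries S a) \<and> (\<forall>i<length a. lower_entries S a ! i \<le> b!i)"
proof
  show "sorted_wrt (<) (lower_entries S a)"
    unfolding sorted_wrt_iff_nth_Suc_transp[OF transp_on_less] length_lower_entries
  proof (intro allI impI)
    fix i assume i: "Suc i < length a"
    have "a!i < a!Suc i" "b!i < b!Suc i"
      using a b i len by (simp_all add: sorted_wrt_iff_nth_less)
    moreover have "a!i \<le> Suc (b!i)" using i le by simp
    ultimately show "lower_entries S a ! i < lower_entries S a ! Suc i"
      using i by (auto simp: S_def)
  qed
  show "\<forall>i<length a. lower_entries S a ! i \<le> b!i"
    using le by (auto simp: S_def le_Suc_eq)
qed

lemma det_pascal_sub_eq_0_if_repeated_row:
  assumes "sorted a" and "\<not> sorted_wrt (<) a" and "length a = length b"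
  shows "det (pascal_sub a b) = 0"
proof -
  obtain i where i: "Suc i < length a" "\<not> a!i < a!Suc i"
    using assms(2) by (auto simp: sorted_wrt_iff_nth_Suc_transp)
  have "a!i = a!Suc i" using i assms(1) by (simp add: sorted_iff_nth_Suc) (meson le_neq_implies_less)
  then show ?thesis
    using i assms(3)
    by (intro det_identical_rows[of _ "length a" i "Suc i"]) (auto intro!: eq_vecI)
qed

lemma det_pascal_sub_map_Suc:
  assumes len: "length a = length b"
  shows "det (pascal_sub a (map Suc b)) =
    (\<Sum>S\<in>Pow {i. i < length a \<and> a!i \<noteq> 0}. det (pascal_sub (lower_entries S a) b))"
proof -
  let ?n = "length a" and ?Z = "{i. i < length a \<and> a!i \<noteq> 0}"
  define F where "F i j = real (b!j choose a!i)" for i j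
  \<comment> \<open>Pascal's rule splits \<open>Suc b\<^sub>j choose a\<^sub>i\<close> into \<open>F + G\<close>; rows with \<open>a\<^sub>i = 0\<close> do not split.\<close>
  define G where "G i j = (if a!i = 0 then 0 else real (b!j choose (a!i - 1)))" for i j
  define M where "M S = mat ?n ?n (\<lambda>(i,j). if i \<in> S then G i j else F i j)" for S
  have "pascal_sub a (map Suc b) = mat ?n ?n (\<lambda>(i,j). F i j + G i j)"
    using len by (intro eq_matI) (auto simp: F_def G_def gr0_conv_Suc)
  then have "det (pascal_sub a (map Suc b)) = (\<Sum>S\<in>Pow {0..<?n}. det (M S))"
    unfolding M_def by (simp add: det_mat_add_eq_sum_row_choices)
  also have "\<dots> = (\<Sum>S\<in>Pow ?Z. det (M S))"
  proof (rule sum.mono_neutral_right)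
    show "\<forall>S\<in>Pow {0..<?n} - Pow ?Z. det (M S) = 0"
    proof
      fix S assume S: "S \<in> Pow {0..<?n} - Pow ?Z"
      obtain i where i: "i \<in> S" "i < ?n" "a!i = 0" using S by fastforce
      have "det (M S) = (\<Sum>j<?n. M S $$ (i,j) * cofactor (M S) i j)"
        by (rule laplace_expansion_row) (use i in \<open>auto simp: M_def\<close>)
      then show "det (M S) = 0" using i by (simp add: M_def G_def)
    qed
  qed auto
  also have "\<dots> = (\<Sum>S\<in>Pow ?Z. det (pascal_sub (lower_entries S a) b))"
    using len
    by (intro sum.cong refl arg_cong[of _ _ det] eq_matI) (auto simp: M_def F_def G_def)
  finally show ?thesis .
qed

lemma det_pascal_sub_map_Suc_nonneg_pos:
  assumes len: "length a = length b" and a: "sorted_wrt (<) a" and b: "sorted_wrt (<) b"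
    and IH: "\<And>a'. length a' = length b \<Longrightarrow> sorted_wrt (<) a' \<Longrightarrow>
      0 \<le> det (pascal_sub a' b) \<and> ((\<forall>i<length a'. a'!i \<le> b!i) \<longrightarrow> 0 < det (pascal_sub a' b))"
  shows "0 \<le> det (pascal_sub a (map Suc b)) \<and>
    ((\<forall>i<length a. a!i \<le> Suc (b!i)) \<longrightarrow> 0 < det (pascal_sub a (map Suc b)))"
proof (intro conjI impI)
  let ?Z = "{i. i < length a \<and> a!i \<noteq> 0}"
  have term_nonneg: "0 \<le> det (pascal_sub (lower_entries S a) b)" for S
    using IH[of "lower_entries S a"] det_pascal_sub_eq_0_if_repeated_row[of "lower_entries S a" b]
      sorted_lower_entries[OF a] len
    by (cases "sorted_wrt (<) (lower_entries S a)") auto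
  note expand = det_pascal_sub_map_Suc[OF len]
  show "0 \<le> det (pascal_sub a (map Suc b))" unfolding expand by (intro sum_nonneg term_nonneg)
  assume le: "\<forall>i<length a. a!i \<le> Suc (b!i)"
  define S0 where "S0 = {i. i < length a \<and> a!i = Suc (b!i)}"
  have "sorted_wrt (<) (lower_entries S0 a) \<and> (\<forall>i<length a. lower_entries S0 a ! i \<le> b!i)"
    unfolding S0_def using a b len le by (rule sorted_wrt_lower_entries_tight)
  then have "0 < det (pascal_sub (lower_entries S0 a) b)" using IH len by auto
  also have "\<dots> \<le> (\<Sum>S\<in>Pow ?Z. det (pascal_sub (lower_entries S a) b))"
    by (rule member_le_sum) (auto simp: S0_def term_nonneg)
  finally show "0 < det (pascal_sub a (map Suc b))" unfolding expand .
qed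

lemma det_pascal_sub_nonneg_pos:
  assumes "length a = length b" and "sorted_wrt (<) a" and "sorted_wrt (<) b"
  shows "0 \<le> det (pascal_sub a b) \<and> ((\<forall>i<length a. a!i \<le> b!i) \<longrightarrow> 0 < det (pascal_sub a b))"
  using assms
proof (induction b arbitrary: a rule: measure_induct_rule[where f="\<lambda>b. sum_list b + length b"])
  case (less b a)
  consider (Nil) "b = []" | (Zero) b' where "b = 0 # b'" | (Suc) b' where "b = map Suc b'" "b' \<noteq> []"
  proof (cases b)
    case (Cons y b')
    show thesis
    proof (cases y)
      case (Suc z)
      with Cons less.prems(3) have "\<forall>x\<in>set b. x \<noteq> 0" by auto
      then have "b = map Suc (map (\<lambda>x. x - 1) b)" by (simp add: map_idI)
      then show thesis by (rule that(3)) (use Cons in simp)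
    qed (use Cons that(2) in blast)
  qed (use that(1) in blast)
  then show ?case
  proof cases
    case Nil
    then show ?thesis using less.prems(1) by (simp add: pascal_sub_def)
  next
    case (Zero b')
    then obtain x a' where a: "a = x # a'" using less.prems(1) by (cases a) auto
    have "0 \<le> det (pascal_sub a' b') \<and> ((\<forall>i<length a'. a'!i \<le> b'!i) \<longrightarrow> 0 < det (pascal_sub a' b'))"
      by (rule less.IH) (use less.prems Zero a in auto)
    moreover have "(\<forall>i<length a. a!i \<le> b!i) \<longleftrightarrow> x = 0 \<and> (\<forall>i<length a'. a'!i \<le> b'!i)"
      using Zero a by (auto simp: less_Suc_eq_0_disj)
    ultimately show ?thesis
      using det_pascal_sub_Cons_0[of a' b' x] less.prems Zero a by (cases "x = 0") simp_all
  next
    case (Suc b')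
    have "sum_list b' + length b' < sum_list b + length b"
      using Suc sum_list_Suc[of "\<lambda>x. x" b'] by simp
    note IH = less.IH[OF this]
    have "0 \<le> det (pascal_sub a (map Suc b')) \<and>
        ((\<forall>i<length a. a!i \<le> Suc (b'!i)) \<longrightarrow> 0 < det (pascal_sub a (map Suc b')))"
      by (rule det_pascal_sub_map_Suc_nonneg_pos) (use less.prems Suc IH in \<open>auto simp: sorted_wrt_map\<close>)
    then show ?thesis using Suc less.prems(1) by simp
  qed
qed

context vec_space
begin

lemma mult_mat_vec_in_span_cols:
  assumes C: "(C :: 'a mat) \<in> carrier_mat n k" and x: "(x :: 'a vec) \<in> carrier_vec k"
  shows "C *\<^sub>v x \<in> span (set (cols C))"
proof -
  have cC: "set (cols C) \<subseteq> carrier_vec n" using C cols_dim by blast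
  have "lincomb_list (\<lambda>i. x $ i) (cols C) =
      mat_of_cols n (cols C) *\<^sub>v vec (length (cols C)) (\<lambda>i. x $ i)"
    by (rule lincomb_list_as_mat_mult) (use cC in auto)
  also have "mat_of_cols n (cols C) = C" using C mat_of_cols_cols[of C] by auto
  also have "vec (length (cols C)) (\<lambda>i. x $ i) = x" using C x by auto
  finally have "\<exists>a. C *\<^sub>v x = lincomb_list a (cols C)" by metis
  then have "C *\<^sub>v x \<in> span_list (cols C)" unfolding span_list_def by simp
  then show ?thesis using span_list_as_span[OF cC] by simp
qed

lemma distinct_lin_indpt_cols_if_injective:
  assumes C: "(C :: 'a mat) \<in> carrier_mat n k"
    and inj: "\<And>x :: 'a vec. x \<in> carrier_vec k \<Longrightarrow> C *\<^sub>v x = 0\<^sub>v n \<Longrightarrow> x = 0\<^sub>v k"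
  shows "distinct (cols C) \<and> lin_indpt (set (cols C))"
proof
  show dist: "distinct (cols C)" by (rule distinct_cols_if_injective[OF C inj])
  show "lin_indpt (set (cols C))"
  proof
    assume "lin_dep (set (cols C))"
    then obtain v where v: "v \<in> carrier_vec k" "v \<noteq> 0\<^sub>v k" "C *\<^sub>v v = 0\<^sub>v n"
      using lin_depE[OF C _ dist] by blast
    from inj[OF v(1) v(3)] v(2) show False by contradiction
  qed
qed

lemma cols_basis_if_injective_generating:
  assumes A: "(A :: 'a mat) \<in> carrier_mat n m" and C: "(C :: 'a mat) \<in> carrier_mat n k"
    and sub: "set (cols C) \<subseteq> set (cols A)"
    and inj: "\<And>x :: 'a vec. x \<in> carrier_vec k \<Longrightarrow> C *\<^sub>v x = 0\<^sub>v n \<Longrightarrow> x = 0\<^sub>v k"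
    and gen: "\<And>j. j < m \<Longrightarrow> \<exists>x :: 'a vec \<in> carrier_vec k. col A j = C *\<^sub>v x"
  shows "distinct (cols C) \<and> lin_indpt (set (cols C)) \<and>
    span (set (cols C)) = span (set (cols A)) \<and> rank A = k"
proof -
  have cC: "set (cols C) \<subseteq> carrier_vec n" using C cols_dim by blast
  have dist: "distinct (cols C)" and indep: "lin_indpt (set (cols C))"
    using distinct_lin_indpt_cols_if_injective[OF C inj] by auto
  have "set (cols A) \<subseteq> span (set (cols C))"
  proof
    fix w assume "w \<in> set (cols A)"
    then obtain j where "j < m" "w = col A j" using A by (auto simp: in_set_conv_nth)
    with gen obtain x where "x \<in> carrier_vec k" "w = C *\<^sub>v x" by blast
    then show "w \<in> span (set (cols C))" using mult_mat_vec_in_span_cols[OF C] by simp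
  qed
  then have sp: "span (set (cols C)) = span (set (cols A))"
    using span_is_monotone[OF sub] span_subsetI[OF cC] by blast
  have "rank A = rank C" unfolding rank_def sp ..
  also have "\<dots> = k" using lin_indpt_full_rank[OF C dist indep] .
  finally show ?thesis using dist indep sp by simp
qed

end

lemma set_cols_pascal_sub_mono:
  assumes "set b' \<subseteq> set b"
  shows "set (cols (pascal_sub a b')) \<subseteq> set (cols (pascal_sub a b))"
proof
  fix w assume "w \<in> set (cols (pascal_sub a b'))"
  then obtain j where j: "j < length b'" "w = col (pascal_sub a b') j" by (auto simp: in_set_conv_nth)
  then have "b'!j \<in> set b" using assms by auto
  then obtain k where k: "k < length b" "b!k = b'!j" by (auto simp: in_set_conv_nth)
  have "w = col (pascal_sub a b) k" using j k by (intro eq_vecI) auto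
  then show "w \<in> set (cols (pascal_sub a b))" using k by (auto simp: in_set_conv_nth)
qed

lemma set_rows_pascal_sub_mono:
  assumes "set a' \<subseteq> set a"
  shows "set (rows (pascal_sub a' b)) \<subseteq> set (rows (pascal_sub a b))"
proof
  fix w assume "w \<in> set (rows (pascal_sub a' b))"
  then obtain i where i: "i < length a'" "w = row (pascal_sub a' b) i" by (auto simp: in_set_conv_nth)
  then have "a'!i \<in> set a" using assms by auto
  then obtain k where k: "k < length a" "a!k = a'!i" by (auto simp: in_set_conv_nth)
  have "w = row (pascal_sub a b) k" using i k by (intro eq_vecI) auto
  then show "w \<in> set (rows (pascal_sub a b))" using k by (auto simp: in_set_conv_nth)
qed

lemma pascal_sub_mult_vec_injective:
  assumes sub: "set a' \<subseteq> set a" and len: "length a' = length b"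
    and d: "det (pascal_sub a' b) \<noteq> 0"
    and x: "x \<in> carrier_vec (length b)" and z: "pascal_sub a b *\<^sub>v x = 0\<^sub>v (length a)"
  shows "x = 0\<^sub>v (length b)"
proof -
  have "pascal_sub a' b *\<^sub>v x = 0\<^sub>v (length a')"
  proof (rule eq_vecI)
    fix i assume "i < dim_vec (0\<^sub>v (length a'))"
    then have i: "i < length a'" by simp
    then have "a'!i \<in> set a" using sub by auto
    then obtain t where t: "t < length a" "a!t = a'!i" by (auto simp: in_set_conv_nth)
    have "(pascal_sub a' b *\<^sub>v x) $ i = (pascal_sub a b *\<^sub>v x) $ t"
      using i t x by (simp add: mult_mat_vec_def scalar_prod_def)
    then show "(pascal_sub a' b *\<^sub>v x) $ i = 0\<^sub>v (length a') $ i" using z t i by simp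
  qed simp
  moreover have "pascal_sub a' b \<in> carrier_mat (length b) (length b)"
    using len by (metis pascal_sub_carrier)
  ultimately show ?thesis
    using det_0_iff_vec_prod_zero_field[of "pascal_sub a' b" "length b"] d x len by auto
qed

lemma pascal_sub_transpose_mult_vec_injective:
  assumes sub: "set b' \<subseteq> set b" and len: "length a = length b'"
    and d: "det (pascal_sub a b') \<noteq> 0"
    and y: "y \<in> carrier_vec (length a)" and z: "transpose_mat (pascal_sub a b) *\<^sub>v y = 0\<^sub>v (length b)"
  shows "y = 0\<^sub>v (length a)"
proof -
  have S: "pascal_sub a b' \<in> carrier_mat (length a) (length a)" using len by (metis pascal_sub_carrier)
  have "transpose_mat (pascal_sub a b') *\<^sub>v y = 0\<^sub>v (length b')"
  proof (rule eq_vecI)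
    fix j assume "j < dim_vec (0\<^sub>v (length b'))"
    then have j: "j < length b'" by simp
    then have "b'!j \<in> set b" using sub by auto
    then obtain k where k: "k < length b" "b!k = b'!j" by (auto simp: in_set_conv_nth)
    have "(transpose_mat (pascal_sub a b') *\<^sub>v y) $ j = (transpose_mat (pascal_sub a b) *\<^sub>v y) $ k"
      using j k y by (simp add: mult_mat_vec_def scalar_prod_def)
    then show "(transpose_mat (pascal_sub a b') *\<^sub>v y) $ j = 0\<^sub>v (length b') $ j" using z k j by simp
  qed simp
  moreover have "det (transpose_mat (pascal_sub a b')) \<noteq> 0" using d det_transpose[OF S] by simp
  moreover have "transpose_mat (pascal_sub a b') \<in> carrier_mat (length a) (length a)" using S by simp
  ultimately show ?thesis
    using det_0_iff_vec_prod_zero_field[of "transpose_mat (pascal_sub a b')" "length a"] y len by auto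
qed

lemma det_pascal_sub_ne_0_if_ordered_subpair:
  assumes "sorted_wrt (<) r" and "sorted_wrt (<) c" and "ordered_subpair r c rh ch"
  shows "det (pascal_sub rh ch) \<noteq> 0"
  using assms det_pascal_sub_nonneg_pos[of rh ch] subseq_sorted_wrt
  unfolding ordered_subpair_def by (metis less_irrefl)

lemma length_le_rank_if_ordered_subpair:
  assumes r: "sorted_wrt (<) r" and c: "sorted_wrt (<) c" and os: "ordered_subpair r c rh ch"
  shows "length rh \<le> vec_space.rank (length r) (pascal_sub r c)"
proof -
  interpret V: vec_space "TYPE(real)" "length r" .
  have sub: "subseq rh r" "subseq ch c" and len: "length rh = length ch"
    using os unfolding ordered_subpair_def by auto
  have inj: "x = 0\<^sub>v (length ch)"
    if "x \<in> carrier_vec (length ch)" "pascal_sub r ch *\<^sub>v x = 0\<^sub>v (length r)" for x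
    by (rule pascal_sub_mult_vec_injective[OF set_subseq_subset[OF sub(1)] len
          det_pascal_sub_ne_0_if_ordered_subpair[OF r c os] that])
  have indpt: "distinct (cols (pascal_sub r ch)) \<and> V.lin_indpt (set (cols (pascal_sub r ch)))"
    by (rule V.distinct_lin_indpt_cols_if_injective[OF pascal_sub_carrier inj])
  have "set (cols (pascal_sub r ch)) \<subseteq> set (cols (pascal_sub r c))"
    by (rule set_cols_pascal_sub_mono[OF set_subseq_subset[OF sub(2)]])
  then have "card (set (cols (pascal_sub r ch))) \<le> V.rank (pascal_sub r c)"
    using indpt by (intro V.rank_ge_card_indpt[OF pascal_sub_carrier]) auto
  moreover have "card (set (cols (pascal_sub r ch))) = length ch"
    using indpt distinct_card by fastforce
  ultimately show ?thesis using len by simp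
qed

lemma pascal_sub_mult_select_cols:
  assumes factor: "pascal_sub r c = L * pascal_sub rh c"
    and L: "L \<in> carrier_mat (length r) (length rh)" and ch: "set ch \<subseteq> set c"
  shows "pascal_sub r ch = L * pascal_sub rh ch"
proof (rule eq_matI)
  fix t j assume "t < dim_row (L * pascal_sub rh ch)" "j < dim_col (L * pascal_sub rh ch)"
  then have t: "t < length r" and j: "j < length ch" using L by auto
  have "ch!j \<in> set c" using ch j by auto
  then obtain k where k: "k < length c" "c!k = ch!j" by (auto simp: in_set_conv_nth)
  have "col (pascal_sub rh ch) j = col (pascal_sub rh c) k" using j k by (intro eq_vecI) auto
  then have "(L * pascal_sub rh ch) $$ (t,j) = (L * pascal_sub rh c) $$ (t,k)" using t j k L by simp
  also have "\<dots> = pascal_sub r ch $$ (t,j)" using t j k by (simp flip: factor)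
  finally show "pascal_sub r ch $$ (t,j) = (L * pascal_sub rh ch) $$ (t,j)" ..
qed (use L in auto)

lemma pascal_sub_bases_if_row_factorization:
  fixes L :: "real mat"
  assumes rh: "set rh \<subseteq> set r" and ch: "set ch \<subseteq> set c" and len: "length rh = length ch"
    and d: "det (pascal_sub rh ch) \<noteq> 0"
    and L: "L \<in> carrier_mat (length r) (length rh)"
    and factor: "pascal_sub r c = L * pascal_sub rh c"
  shows "vec_space.rank (length r) (pascal_sub r c) = length rh \<and>
    invertible_mat (pascal_sub rh ch) \<and>
    distinct (rows (pascal_sub rh c)) \<and>
    \<not> LinearCombinations.module.lin_dep class_ring (module_vec TYPE(real) (length c))
        (set (rows (pascal_sub rh c))) \<and>
    LinearCombinations.module.span class_ring (module_vec TYPE(real) (length c))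
        (set (rows (pascal_sub rh c)))
      = LinearCombinations.module.span class_ring (module_vec TYPE(real) (length c))
        (set (rows (pascal_sub r c))) \<and>
    distinct (cols (pascal_sub r ch)) \<and>
    \<not> LinearCombinations.module.lin_dep class_ring (module_vec TYPE(real) (length r))
        (set (cols (pascal_sub r ch))) \<and>
    LinearCombinations.module.span class_ring (module_vec TYPE(real) (length r))
        (set (cols (pascal_sub r ch)))
      = LinearCombinations.module.span class_ring (module_vec TYPE(real) (length r))
        (set (cols (pascal_sub r c)))"
proof -
  interpret VR: vec_space "TYPE(real)" "length r" .
  interpret VC: vec_space "TYPE(real)" "length c" .
  let ?P = "length rh"
  define A where "A = pascal_sub r c"
  define B where "B = pascal_sub rh c"
  define C where "C = pascal_sub r ch"
  define S where "S = pascal_sub rh ch"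
  have A: "A \<in> carrier_mat (length r) (length c)" by (simp add: A_def)
  have B: "B \<in> carrier_mat ?P (length c)" by (simp add: B_def)
  have C: "C \<in> carrier_mat (length r) ?P" using len by (metis C_def pascal_sub_carrier)
  have S: "S \<in> carrier_mat ?P ?P" using len by (metis S_def pascal_sub_carrier)
  have AB: "A = L * B" using factor by (simp add: A_def B_def)
  obtain Si where Si: "Si \<in> carrier_mat ?P ?P" "S * Si = 1\<^sub>m ?P" "Si * S = 1\<^sub>m ?P"
    using det_inverse_exists[OF S] d by (auto simp: S_def)
  have CLS: "C = L * S"
    unfolding C_def S_def by (rule pascal_sub_mult_select_cols[OF factor L ch])
  have col_gen: "\<exists>x \<in> carrier_vec ?P. col A k = C *\<^sub>v x" if k: "k < length c" for k
  proof
    show "Si *\<^sub>v col B k \<in> carrier_vec ?P" using Si(1) B k unfolding carrier_vec_def by auto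
    show "col A k = C *\<^sub>v (Si *\<^sub>v col B k)"
      unfolding AB CLS by (rule col_mult_eq_mult_inverse_col[OF L B S Si(1,2) k])
  qed
  have row_gen: "\<exists>y \<in> carrier_vec ?P. col (transpose_mat A) t = transpose_mat B *\<^sub>v y"
    if t: "t < length r" for t
  proof
    show "row L t \<in> carrier_vec ?P" using L unfolding carrier_vec_def by auto
    have "transpose_mat A = transpose_mat B * transpose_mat L"
      unfolding AB using L B by (rule transpose_mult)
    then have "col (transpose_mat A) t = transpose_mat B *\<^sub>v col (transpose_mat L) t"
      using col_mult2[of "transpose_mat B" "length c" ?P "transpose_mat L" "length r" t] L B t by simp
    then show "col (transpose_mat A) t = transpose_mat B *\<^sub>v row L t" using L t by simp
  qed
  have C_inj: "x = 0\<^sub>v ?P" if "x \<in> carrier_vec ?P" "C *\<^sub>v x = 0\<^sub>v (length r)" for x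
    using pascal_sub_mult_vec_injective[OF rh len d] that len by (simp add: C_def)
  have B_inj: "y = 0\<^sub>v ?P"
    if "y \<in> carrier_vec ?P" "transpose_mat B *\<^sub>v y = 0\<^sub>v (length c)" for y
    using pascal_sub_transpose_mult_vec_injective[OF ch len d] that by (simp add: B_def)
  have cols: "distinct (cols C) \<and> VR.lin_indpt (set (cols C)) \<and>
      VR.span (set (cols C)) = VR.span (set (cols A)) \<and> VR.rank A = ?P"
    by (rule VR.cols_basis_if_injective_generating[OF A C _ C_inj col_gen])
      (simp add: A_def C_def set_cols_pascal_sub_mono[OF ch])
  have rows: "distinct (cols (transpose_mat B)) \<and> VC.lin_indpt (set (cols (transpose_mat B))) \<and>
      VC.span (set (cols (transpose_mat B))) = VC.span (set (cols (transpose_mat A)))"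
    using VC.cols_basis_if_injective_generating[of "transpose_mat A" "length r" "transpose_mat B" ?P,
        OF _ _ _ B_inj row_gen] A B set_rows_pascal_sub_mono[OF rh, of c]
    by (simp add: A_def B_def)
  have "invertible_mat S"
    unfolding invertible_mat_def inverts_mat_def using S Si by auto
  then show ?thesis using cols rows by (simp add: A_def B_def C_def S_def)
qed

lemma pascal_row_in_span_of_interlaced_block:
  assumes sr: "sorted_wrt (<) r" and sc: "sorted_wrt (<) c"
    and jq: "j0 + q \<le> length r" and gq: "g + q = length c"
    and inter: "\<And>i. i < q \<Longrightarrow> r!(j0+i) \<le> c!(g+i)"
    and small: "\<And>k. k < g \<Longrightarrow> c!k < r!j0"
    and t: "j0 \<le> t" "t < length r"
  shows "\<exists>y. \<forall>k<length c.
    real (c!k choose r!t) = (\<Sum>i\<in>{j0..<j0+q}. y i * real (c!k choose r!i))"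
proof -
  define a where "a = take q (drop j0 r)"
  define b where "b = drop g c"
  have la: "length a = q" using jq by (simp add: a_def)
  have lb: "length b = q" using gq by (simp add: b_def)
  have ai: "a!i = r!(j0+i)" if "i < q" for i using that jq by (simp add: a_def)
  have bi: "b!i = c!(g+i)" if "i < q" for i using that gq by (simp add: b_def)
  have "0 < det (pascal_sub a b)"
    using det_pascal_sub_nonneg_pos[of a b] sr sc la lb inter ai bi
    by (simp add: a_def b_def sorted_wrt_take sorted_wrt_drop)
  moreover have "pascal_sub a b \<in> carrier_mat q q" using la lb by (metis pascal_sub_carrier)
  ultimately obtain z where z: "\<forall>k<q. (\<Sum>i<q. z i * pascal_sub a b $$ (i,k)) = real (c!(g+k) choose r!t)"
    using ex_row_combination_if_det_ne_0[of "pascal_sub a b" q "\<lambda>k. real (c!(g+k) choose r!t)"]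
    by auto
  have solves: "(\<Sum>i<q. z i * real (c!(g+k) choose r!(j0+i))) = real (c!(g+k) choose r!t)"
    if k: "k < q" for k
    using z k la lb by (simp add: ai bi)
  have r_ge: "r!j0 \<le> r!i" if "j0 \<le> i" "i < length r" for i
    using sorted_nth_mono[OF strict_sorted_imp_sorted[OF sr] that] .
  show ?thesis
  proof (intro exI allI impI)
    fix k assume k: "k < length c"
    show "real (c!k choose r!t) = (\<Sum>i\<in>{j0..<j0+q}. z (i-j0) * real (c!k choose r!i))"
    proof (cases "k < g")
      case True
      then have lt: "c!k < r!i" if "j0 \<le> i" "i < length r" for i using small r_ge that by fastforce
      have "(\<Sum>i\<in>{j0..<j0+q}. z (i-j0) * real (c!k choose r!i)) = 0"
        by (rule sum.neutral) (use lt jq in auto)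
      then show ?thesis using lt t by simp
    next
      case False
      then obtain k' where k': "k = g + k'" "k' < q" using k gq by (metis add_diff_inverse_nat add_less_cancel_left)
      have "(\<Sum>i\<in>{j0..<j0+q}. z (i-j0) * real (c!k choose r!i))
          = (\<Sum>i<q. z i * real (c!(g+k') choose r!(j0+i)))"
        by (simp add: sum.atLeastLessThan_shift_0[of _ j0] k'(1) atLeast0LessThan)
      then show ?thesis using solves[OF k'(2)] k'(1) by simp
    qed
  qed
qed

lemma pascal_sub_eq_mult_if_rows_in_span:
  assumes "\<And>t. t < length r \<Longrightarrow> \<exists>y \<in> carrier_vec (length rh). \<forall>k<length c.
      real (c!k choose r!t) = (\<Sum>i<length rh. y$i * real (c!k choose rh!i))"
  obtains L where "L \<in> carrier_mat (length r) (length rh)" "pascal_sub r c = L * pascal_sub rh c"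
proof -
  obtain Y where Y: "\<And>t. t < length r \<Longrightarrow> Y t \<in> carrier_vec (length rh) \<and> (\<forall>k<length c.
      real (c!k choose r!t) = (\<Sum>i<length rh. Y t $ i * real (c!k choose rh!i)))"
    using assms by metis
  define L where "L = mat (length r) (length rh) (\<lambda>(t,i). Y t $ i)"
  have "pascal_sub r c = L * pascal_sub rh c"
  proof (rule eq_matI)
    fix t k assume "t < dim_row (L * pascal_sub rh c)" "k < dim_col (L * pascal_sub rh c)"
    then have t: "t < length r" and k: "k < length c" by (auto simp: L_def)
    have "(L * pascal_sub rh c) $$ (t,k) = (\<Sum>i<length rh. Y t $ i * real (c!k choose rh!i))"
      using t k by (auto simp: scalar_prod_def L_def atLeast0LessThan intro!: sum.cong)
    then show "pascal_sub r c $$ (t,k) = (L * pascal_sub rh c) $$ (t,k)" using Y t k by simp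
  qed (auto simp: L_def)
  moreover have "L \<in> carrier_mat (length r) (length rh)" by (simp add: L_def)
  ultimately show ?thesis using that by blast
qed

definition first_col :: "nat list \<Rightarrow> nat list \<Rightarrow> nat \<Rightarrow> nat" where
  "first_col r c i = (LEAST k. k < length c \<and> r!i \<le> c!k)"

lemma sel_beta_first_col [simp]:
  "sel_beta r c 0 = first_col r c 0"
  "sel_beta r c (Suc i) = max (first_col r c (Suc i)) (sel_beta r c i + 1)"
  by (simp_all add: first_col_def)

declare sel_beta.simps [simp del]

lemma strict_mono_sel_beta: "strict_mono (sel_beta r c)"
  by (simp add: strict_mono_Suc_iff less_max_iff_disj)

lemma first_col_le_sel_beta: "first_col r c i \<le> sel_beta r c i"
  by (cases i) simp_all

lemma first_col_spec:
  assumes "c \<noteq> []" and "r!i \<le> last c"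
  shows "first_col r c i < length c" "r!i \<le> c!(first_col r c i)"
    and "k < first_col r c i \<Longrightarrow> c!k < r!i"
proof -
  have ex: "length c - 1 < length c \<and> r!i \<le> c!(length c - 1)"
    using assms by (simp add: last_conv_nth)
  show "first_col r c i < length c" "r!i \<le> c!(first_col r c i)"
    using LeastI[where P = "\<lambda>k. k < length c \<and> r!i \<le> c!k", OF ex] by (simp_all add: first_col_def)
  show "c!k < r!i" if "k < first_col r c i"
    using not_less_Least[OF that[unfolded first_col_def]] that
      LeastI[where P = "\<lambda>k. k < length c \<and> r!i \<le> c!k", OF ex] by (auto simp: first_col_def)
qed

locale pascal_selection =
  fixes r c :: "nat list"
  assumes selection_r: "selection r" and selection_c: "selection c"
    and hd_le_last: "hd r \<le> last c"
begin

lemma r_ne: "r \<noteq> []" and c_ne: "c \<noteq> []"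
  and sorted_r: "sorted_wrt (<) r" and sorted_c: "sorted_wrt (<) c"
  using selection_r selection_c by (auto simp: selection_def)

lemma c_le_last: "k < length c \<Longrightarrow> c!k \<le> last c"
  using sorted_nth_mono[OF strict_sorted_imp_sorted[OF sorted_c], of k "length c - 1"] c_ne
  by (simp add: last_conv_nth)

lemma selM_spec: "selM r c < length r" "r!(selM r c) \<le> last c"
  using GreatestI_nat[of "\<lambda>i. i < length r \<and> r!i \<le> last c" 0 "length r"]
    hd_le_last r_ne by (auto simp: selM_def hd_conv_nth)

lemma le_selM_iff: "i < length r \<Longrightarrow> r!i \<le> last c \<longleftrightarrow> i \<le> selM r c"
  using Greatest_le_nat[of "\<lambda>i. i < length r \<and> r!i \<le> last c" i "length r"] selM_spec
    sorted_nth_mono[OF strict_sorted_imp_sorted[OF sorted_r], of i "selM r c"]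
  by (auto simp: selM_def)

lemma first_col_spec_le_selM:
  assumes "i \<le> selM r c"
  shows "first_col r c i < length c" "r!i \<le> c!(first_col r c i)"
    and "k < first_col r c i \<Longrightarrow> c!k < r!i"
  using first_col_spec[OF c_ne] le_selM_iff[of i] selM_spec(1) assms by auto

lemma sel_p_spec: "sel_p r c \<le> selM r c" "sel_beta r c (sel_p r c) < length c"
proof -
  have "sel_p r c \<le> selM r c \<and> sel_beta r c (sel_p r c) < length c"
    unfolding sel_p_def
    by (rule GreatestI_nat[of _ 0 "selM r c"]) (use first_col_spec_le_selM(1)[of 0] in auto)
  then show "sel_p r c \<le> selM r c" "sel_beta r c (sel_p r c) < length c" by auto
qed

lemma le_sel_p: "i \<le> selM r c \<Longrightarrow> sel_beta r c i < length c \<Longrightarrow> i \<le> sel_p r c"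
  using Greatest_le_nat[of "\<lambda>i. i \<le> selM r c \<and> sel_beta r c i < length c" i "selM r c"]
  by (simp add: sel_p_def)

lemma sel_beta_less_length: "i \<le> sel_p r c \<Longrightarrow> sel_beta r c i < length c"
  using sel_p_spec(2) strict_mono_less_eq[OF strict_mono_sel_beta] by (meson le_less_trans)

lemma r_le_c_sel_beta:
  assumes "i \<le> sel_p r c"
  shows "r!i \<le> c!(sel_beta r c i)"
proof -
  have "i \<le> selM r c" using assms sel_p_spec(1) by simp
  then have "r!i \<le> c!(first_col r c i)" by (rule first_col_spec_le_selM)
  also have "\<dots> \<le> c!(sel_beta r c i)"
    using sorted_nth_mono[OF strict_sorted_imp_sorted[OF sorted_c] first_col_le_sel_beta
        sel_beta_less_length[OF assms]] .
  finally show ?thesis .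
qed

lemma length_sel_rhat: "length (sel_rhat r c) = sel_p r c + 1"
  using sel_p_spec(1) selM_spec(1) by (simp add: sel_rhat_def)

lemma length_sel_chat: "length (sel_chat r c) = sel_p r c + 1"
  by (simp add: sel_chat_def)

lemma nth_sel_rhat: "i \<le> sel_p r c \<Longrightarrow> sel_rhat r c ! i = r!i"
  by (simp add: sel_rhat_def)

lemma nth_sel_chat: "i \<le> sel_p r c \<Longrightarrow> sel_chat r c ! i = c!(sel_beta r c i)"
  by (simp add: sel_chat_def nth_append less_Suc_eq_le)

lemma ordered_subpair_sel: "ordered_subpair r c (sel_rhat r c) (sel_chat r c)"
  unfolding ordered_subpair_def
proof (intro conjI allI impI)
  show "subseq (sel_rhat r c) r" unfolding sel_rhat_def by (rule prefix_imp_subseq[OF take_is_prefix])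
  have "set (sel_chat r c) \<subseteq> set c"
    using sel_beta_less_length by (auto simp: sel_chat_def)
  moreover have "sorted_wrt (<) (sel_chat r c)"
    unfolding sorted_wrt_iff_nth_less length_sel_chat
    using sorted_c strict_mono_sel_beta sel_beta_less_length
    by (auto simp: nth_sel_chat sorted_wrt_iff_nth_less strict_mono_def)
  ultimately show "subseq (sel_chat r c) c"
    using sorted_subset_imp_subseq strict_sorted_imp_sorted[OF sorted_c] by blast
  show "length (sel_rhat r c) = length (sel_chat r c)" by (simp add: length_sel_rhat length_sel_chat)
  show "sel_rhat r c ! i \<le> sel_chat r c ! i" if "i < length (sel_rhat r c)" for i
    using that r_le_c_sel_beta by (simp add: length_sel_rhat nth_sel_rhat nth_sel_chat)
qed

lemma sel_beta_tail_block:
  assumes "sel_p r c < selM r c"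
  obtains j0 where "j0 \<le> sel_p r c" "\<And>k. k < sel_beta r c j0 \<Longrightarrow> c!k < r!j0"
    "\<And>i. j0 + i \<le> sel_p r c \<Longrightarrow> sel_beta r c (j0 + i) = sel_beta r c j0 + i"
    "sel_beta r c (sel_p r c) = length c - 1"
proof -
  let ?p = "sel_p r c" and ?\<beta> = "sel_beta r c"
  have Suc_p: "Suc ?p \<le> selM r c" using assms by simp
  then have "\<not> ?\<beta> (Suc ?p) < length c" using le_sel_p by fastforce
  then have last: "?\<beta> ?p = length c - 1"
    \<comment> \<open>\<open>\<beta> (p + 1) = max (first_col r c (p + 1)) (\<beta> p + 1)\<close> overflows, its first argument does not\<close>
    using first_col_spec_le_selM(1)[OF Suc_p] sel_p_spec(2) by (auto simp: max_def split: if_splits)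
  define j0 where "j0 = (GREATEST i. i \<le> ?p \<and> ?\<beta> i = first_col r c i)"
  have j0: "j0 \<le> ?p \<and> ?\<beta> j0 = first_col r c j0"
    unfolding j0_def by (rule GreatestI_nat[of _ 0 ?p]) auto
  have j0_max: "i \<le> j0" if "i \<le> ?p" "?\<beta> i = first_col r c i" for i
    unfolding j0_def by (rule Greatest_le_nat[of _ _ ?p]) (use that in auto)
  have consecutive: "?\<beta> (j0 + i) = ?\<beta> j0 + i" if "j0 + i \<le> ?p" for i
    using that
  proof (induction i)
    case (Suc i)
    then have "?\<beta> (Suc (j0 + i)) \<noteq> first_col r c (Suc (j0 + i))" using j0_max by fastforce
    then show ?case using Suc by (simp add: max_def split: if_splits)
  qed simp
  have small: "c!k < r!j0" if "k < ?\<beta> j0" for k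
    using first_col_spec_le_selM(3)[of j0 k] j0 sel_p_spec(1) that by simp
  show thesis by (rule that[OF _ small consecutive last]) (use j0 in simp)
qed

lemma row_in_span_sel_rhat_tail:
  assumes tail: "sel_p r c < t" "t < length r" "r!t \<le> last c"
  shows "\<exists>y \<in> carrier_vec (sel_p r c + 1). \<forall>k<length c.
    real (c!k choose r!t) = (\<Sum>i<sel_p r c + 1. y$i * real (c!k choose r!i))"
proof -
  let ?P = "sel_p r c + 1"
  have "sel_p r c < selM r c" using tail le_selM_iff by fastforce
  then obtain j0 where j0: "j0 \<le> sel_p r c" "\<And>k. k < sel_beta r c j0 \<Longrightarrow> c!k < r!j0"
    "\<And>i. j0 + i \<le> sel_p r c \<Longrightarrow> sel_beta r c (j0 + i) = sel_beta r c j0 + i"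
    "sel_beta r c (sel_p r c) = length c - 1"
    using sel_beta_tail_block by blast
  define q where "q = ?P - j0"
  have jq: "j0 + q = ?P" using j0(1) by (simp add: q_def)
  have "length c - 1 = sel_beta r c j0 + (sel_p r c - j0)"
    using j0(3)[of "sel_p r c - j0"] j0(1,4) by simp
  then have gq: "sel_beta r c j0 + q = length c"
    using j0(1) c_ne[folded length_greater_0_conv] unfolding q_def by arith
  have inter: "r!(j0+i) \<le> c!(sel_beta r c j0 + i)" if "i < q" for i
    using r_le_c_sel_beta[of "j0 + i"] j0(3)[of i] that jq by simp
  have "j0 + q \<le> length r" using jq sel_p_spec(1) selM_spec(1) by simp
  moreover have "j0 \<le> t" using j0(1) tail(1) by simp
  ultimately obtain y where y: "\<forall>k<length c.
      real (c!k choose r!t) = (\<Sum>i\<in>{j0..<j0+q}. y i * real (c!k choose r!i))"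
    using pascal_row_in_span_of_interlaced_block[OF sorted_r sorted_c _ gq inter j0(2) _ tail(2)]
    by blast
  define Y where "Y = vec ?P (\<lambda>i. if j0 \<le> i then y i else 0)"
  have "(\<Sum>i<?P. Y$i * real (c!k choose r!i)) = (\<Sum>i\<in>{j0..<j0+q}. y i * real (c!k choose r!i))"
    for k by (rule sum.mono_neutral_cong_right) (auto simp: Y_def jq)
  then show ?thesis using y by (intro bexI[of _ Y]) (auto simp: Y_def)
qed

lemma row_in_span_sel_rhat:
  assumes t: "t < length r"
  shows "\<exists>y \<in> carrier_vec (sel_p r c + 1). \<forall>k<length c.
    real (c!k choose r!t) = (\<Sum>i<sel_p r c + 1. y$i * real (c!k choose r!i))"
proof -
  let ?P = "sel_p r c + 1"
  consider (head) "t \<le> sel_p r c" | (beyond) "\<not> r!t \<le> last c" | (tail) "sel_p r c < t" "r!t \<le> last c"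
    by linarith
  then show ?thesis
  proof cases
    case head
    have "(\<Sum>i<?P. unit_vec ?P t $ i * real (c!k choose r!i)) =
        (\<Sum>i<?P. if i = t then real (c!k choose r!i) else 0)" for k
      by (intro sum.cong refl) (simp add: unit_vec_def)
    then show ?thesis using head by (intro bexI[of _ "unit_vec ?P t"]) auto
  next
    case beyond
    then have "c!k < r!t" if "k < length c" for k using c_le_last[OF that] by simp
    then show ?thesis by (intro bexI[of _ "0\<^sub>v ?P"]) auto
  next
    case tail
    then show ?thesis using row_in_span_sel_rhat_tail t by blast
  qed
qed

theorem maximal_subpair_and_bases:
  shows "maximal_ordered_subpair r c (sel_rhat r c) (sel_chat r c) \<and>
    vec_space.rank (length r) (pascal_sub r c) = sel_p r c + 1 \<and>
    invertible_mat (pascal_sub (sel_rhat r c) (sel_chat r c)) \<and>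
    distinct (rows (pascal_sub (sel_rhat r c) c)) \<and>
    \<not> LinearCombinations.module.lin_dep class_ring (module_vec TYPE(real) (length c))
        (set (rows (pascal_sub (sel_rhat r c) c))) \<and>
    LinearCombinations.module.span class_ring (module_vec TYPE(real) (length c))
        (set (rows (pascal_sub (sel_rhat r c) c)))
      = LinearCombinations.module.span class_ring (module_vec TYPE(real) (length c))
        (set (rows (pascal_sub r c))) \<and>
    distinct (cols (pascal_sub r (sel_chat r c))) \<and>
    \<not> LinearCombinations.module.lin_dep class_ring (module_vec TYPE(real) (length r))
        (set (cols (pascal_sub r (sel_chat r c)))) \<and>
    LinearCombinations.module.span class_ring (module_vec TYPE(real) (length r))
        (set (cols (pascal_sub r (sel_chat r c))))
      = LinearCombinations.module.span class_ring (module_vec TYPE(real) (length r))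
        (set (cols (pascal_sub r c)))"
proof -
  let ?rh = "sel_rhat r c" and ?ch = "sel_chat r c"
  have os: "ordered_subpair r c ?rh ?ch" by (rule ordered_subpair_sel)
  then have sub: "set ?rh \<subseteq> set r" "set ?ch \<subseteq> set c" and len: "length ?rh = length ?ch"
    by (auto simp: ordered_subpair_def dest: set_subseq_subset)
  obtain L where L: "L \<in> carrier_mat (length r) (length ?rh)" "pascal_sub r c = L * pascal_sub ?rh c"
  proof (rule pascal_sub_eq_mult_if_rows_in_span)
    fix t assume "t < length r"
    then show "\<exists>y \<in> carrier_vec (length ?rh). \<forall>k<length c.
        real (c!k choose r!t) = (\<Sum>i<length ?rh. y$i * real (c!k choose ?rh!i))"
      using row_in_span_sel_rhat by (simp add: length_sel_rhat nth_sel_rhat)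
  qed
  note bases = pascal_sub_bases_if_row_factorization[OF sub len
      det_pascal_sub_ne_0_if_ordered_subpair[OF sorted_r sorted_c os] L]
  have "maximal_ordered_subpair r c ?rh ?ch"
    unfolding maximal_ordered_subpair_def
    using os length_le_rank_if_ordered_subpair[OF sorted_r sorted_c] bases by auto
  with bases show ?thesis by (simp add: length_sel_rhat)
qed

end

lemma pascal_sub_eq_0_if_last_less_hd:
  assumes "sorted_wrt (<) r" "sorted_wrt (<) c" "r \<noteq> []" "c \<noteq> []" "last c < hd r"
  shows "pascal_sub r c = 0\<^sub>m (length r) (length c)"
proof (rule eq_matI)
  fix i j assume "i < dim_row (0\<^sub>m (length r) (length c))" "j < dim_col (0\<^sub>m (length r) (length c))"
  then have i: "i < length r" and j: "j < length c" by auto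
  have "c!j \<le> last c"
    using sorted_nth_mono[OF strict_sorted_imp_sorted[OF assms(2)], of j "length c - 1"] j assms(4)
    by (simp add: last_conv_nth)
  moreover have "hd r \<le> r!i"
    using sorted_nth_mono[OF strict_sorted_imp_sorted[OF assms(1)], of 0 i] i assms(3)
    by (simp add: hd_conv_nth)
  ultimately show "pascal_sub r c $$ (i,j) = 0\<^sub>m (length r) (length c) $$ (i,j)"
    using i j assms(5) by simp
qed auto

theorem theorem3:
  fixes r c :: "nat list"
  assumes "selection r" and "selection c"
  shows "(hd r > last c \<longrightarrow>
            pascal_sub r c = 0\<^sub>m (length r) (length c) \<and>
            vec_space.rank (length r) (pascal_sub r c) = 0)
       \<and> (hd r \<le> last c \<longrightarrow>
            maximal_ordered_subpair r c (sel_rhat r c) (sel_chat r c) \<and>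
            vec_space.rank (length r) (pascal_sub r c) = sel_p r c + 1 \<and>
            invertible_mat (pascal_sub (sel_rhat r c) (sel_chat r c)) \<and>
            distinct (rows (pascal_sub (sel_rhat r c) c)) \<and>
            \<not> LinearCombinations.module.lin_dep class_ring (module_vec TYPE(real) (length c))
                (set (rows (pascal_sub (sel_rhat r c) c))) \<and>
            LinearCombinations.module.span class_ring (module_vec TYPE(real) (length c))
                (set (rows (pascal_sub (sel_rhat r c) c)))
              = LinearCombinations.module.span class_ring (module_vec TYPE(real) (length c))
                (set (rows (pascal_sub r c))) \<and>
            distinct (cols (pascal_sub r (sel_chat r c))) \<and>
            \<not> LinearCombinations.module.lin_dep class_ring (module_vec TYPE(real) (length r))
                (set (cols (pascal_sub r (sel_chat r c)))) \<and>
            LinearCombinations.module.span class_ring (module_vec TYPE(real) (length r))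
                (set (cols (pascal_sub r (sel_chat r c))))
              = LinearCombinations.module.span class_ring (module_vec TYPE(real) (length r))
                (set (cols (pascal_sub r c))))"
proof -
  have zero: "pascal_sub r c = 0\<^sub>m (length r) (length c)" if "hd r > last c"
    using assms that by (intro pascal_sub_eq_0_if_last_less_hd) (auto simp: selection_def)
  have "pascal_selection r c" if "hd r \<le> last c"
    using assms that by unfold_locales
  then show ?thesis
    using zero pascal_selection.maximal_subpair_and_bases[of r c] vec_space.rank_0I by auto
qed

end
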